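(* Let $n\geq1$. Every connected component of an effectively open subset of $\mathbb{R}^n$ is effectively open.
   Context: A subset of $\mathbb{R}^n$ is effectively open if it equals $\bigcup_{a\in W}\beta_a$ for some c.e. set $W\subseteq\omega$, where $\beta$ is a standard computable numbering of all rational open balls $B(a,r)$ with $a\in\mathbb{Q}^n$, $r\in\mathbb{Q}^+$ (together with the empty ball). *)

theory Defs
  imports "HOL-Analysis.Analysis" "HOL-Library.Nat_Bijection"
begin

text \<open>Syntax of primitive recursive function terms (lenient arity:
missing arguments are read as 0; this does not enlarge the class of
functions obtained, all of which remain primitive recursive).\<close>

datatype recf = Zf | Sf | Idf nat | Cnf recf "recf list" | Prf recf recf

fun arg :: "nat list \<Rightarrow> nat \<Rightarrow> nat" where
  "arg xs i = (if i < length xs then xs ! i else 0)"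

fun eval_recf :: "recf \<Rightarrow> nat list \<Rightarrow> nat" where
  "eval_recf Zf xs = 0"
| "eval_recf Sf xs = Suc (arg xs 0)"
| "eval_recf (Idf i) xs = arg xs i"
| "eval_recf (Cnf f gs) xs = eval_recf f (map (\<lambda>g. eval_recf g xs) gs)"
| "eval_recf (Prf f g) xs =
     rec_nat (eval_recf f (tl xs)) (\<lambda>k r. eval_recf g (r # k # tl xs)) (arg xs 0)"

text \<open>A set of naturals is computably enumerable iff it is the projection
of a primitive recursive relation (Kleene normal form).\<close>

definition ce :: "nat set \<Rightarrow> bool" where
  "ce W \<longleftrightarrow> (\<exists>f. W = {x. \<exists>y. eval_recf f [x, y] = 0})"

text \<open>Rationals: code k = <s,<p,d>> denotes (-1)^s * p/(d+1).\<close>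
definition rat_of_code :: "nat \<Rightarrow> real" where
  "rat_of_code k = (case prod_decode k of (s, m) \<Rightarrow>
      (case prod_decode m of (p, d) \<Rightarrow>
         (if s = 0 then 1 else -1) * real p / real (Suc d)))"

definition coord_idx :: "'n::finite \<Rightarrow> nat" where
  "coord_idx = (SOME f. bij_betw f (UNIV :: 'n set) {..<CARD('n)})"

text \<open>Ball code a = <c, r>: c codes the list of centre coordinates,
r codes the radius; a non-positive radius yields the empty ball.\<close>
definition beta :: "nat \<Rightarrow> (real ^ 'n::finite) set" where
  "beta a = (case prod_decode a of (c, r) \<Rightarrow>
      ball (\<chi> i. rat_of_code (arg (list_decode c) (coord_idx i))) (rat_of_code r))"

definition eff_open :: "(real ^ 'n::finite) set \<Rightarrow> bool" where
  "eff_open U \<longleftrightarrow> (\<exists>W. ce W \<and> U = (\<Union>a\<in>W. beta a))"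

end

theory Submission
  imports Defs
begin

text \<open>Pick a ball \<open>beta a0\<close> of the enumeration of \<open>U\<close> that meets \<open>C\<close>, and call an
enumerated ball reachable if it is joined to \<open>beta a0\<close> by a finite chain of enumerated balls
in which consecutive balls share a rational point. Every reachable ball lies in \<open>C\<close>. Two
overlapping open balls share a rational point, so the union of the reachable balls and the
union of the remaining ones are disjoint open sets covering \<open>C\<close>; by connectedness the
reachable balls exhaust \<open>C\<close>. Reachability is c.e.: a chain together with the witnesses for
membership in the enumeration and the shared rational points is a single number, and whether
a rational point lies in a rational ball is, after clearing denominators, a primitive
recursive comparison of natural numbers.\<close>

section \<open>Primitive recursive functions\<close>

declare arg.simps[simp del]

lemma arg_Nil[simp]: "arg [] i = 0" by (simp add: arg.simps)
lemma arg_Cons0[simp]: "arg (x#xs) 0 = x" by (simp add: arg.simps)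
lemma arg_ConsS[simp]: "arg (x#xs) (Suc i) = arg xs i" by (simp add: arg.simps)
lemma arg_tl[simp]: "arg (tl xs) i = arg xs (Suc i)" by (cases xs) auto
lemma arg_drop: "arg (drop k xs) i = arg xs (k + i)" by (auto simp: arg.simps)
lemma arg_append: "arg (A @ B) p = (if p < length A then A ! p else arg B (p - length A))"
  by (auto simp: arg.simps nth_append)
lemma arg_map_upt: "i < N \<Longrightarrow> arg (map f [0..<N]) i = f i"
  by (simp add: arg.simps)

definition primrec_fn :: "(nat list \<Rightarrow> nat) \<Rightarrow> bool" where
  "primrec_fn h \<longleftrightarrow> (\<exists>f. eval_recf f = h)"

definition depends_below :: "nat \<Rightarrow> (nat list \<Rightarrow> nat) \<Rightarrow> bool" where
  "depends_below N h \<longleftrightarrow> (\<forall>xs ys. (\<forall>i<N. arg xs i = arg ys i) \<longrightarrow> h xs = h ys)"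

lemma depends_below_mono: "depends_below N h \<Longrightarrow> N \<le> M \<Longrightarrow> depends_below M h"
  unfolding depends_below_def by auto

lemma ex_depends_below_list:
  "\<forall>g\<in>set gs. \<exists>N. depends_below N g \<Longrightarrow> \<exists>N. \<forall>g\<in>set gs. depends_below N g"
proof (induction gs)
  case (Cons g gs)
  then obtain N1 N2 where "depends_below N1 g" "\<forall>g\<in>set gs. depends_below N2 g" by auto
  then show ?case by (intro exI[of _ "max N1 N2"]) (auto intro: depends_below_mono)
qed simp

lemma eval_recf_depends_below: "\<exists>N. depends_below N (eval_recf f)"
proof (induction f)
  case Zf then show ?case by (auto simp: depends_below_def)
next
  case Sf then show ?case by (intro exI[of _ 1]) (auto simp: depends_below_def)
next
  case (Idf i) then show ?case by (intro exI[of _ "Suc i"]) (auto simp: depends_below_def)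
next
  case (Cnf f gs)
  then obtain N where N: "\<forall>g\<in>set gs. depends_below N (eval_recf g)"
    using ex_depends_below_list[of "map eval_recf gs"] by auto
  show ?case
  proof (intro exI[of _ N], unfold depends_below_def, intro allI impI)
    fix xs ys :: "nat list" assume "\<forall>i<N. arg xs i = arg ys i"
    then have "map (\<lambda>g. eval_recf g xs) gs = map (\<lambda>g. eval_recf g ys) gs"
      using N by (auto simp: depends_below_def)
    then show "eval_recf (Cnf f gs) xs = eval_recf (Cnf f gs) ys" by (simp del: map_eq_conv)
  qed
next
  case (Prf f g)
  then obtain N1 N2 where N1: "depends_below N1 (eval_recf f)" and N2: "depends_below N2 (eval_recf g)"
    by auto
  show ?case
  proof (intro exI[of _ "Suc (N1 + N2)"], unfold depends_below_def, intro allI impI)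
    fix xs ys :: "nat list" assume A: "\<forall>i<Suc (N1 + N2). arg xs i = arg ys i"
    have "\<forall>i<N1. arg (tl xs) i = arg (tl ys) i" using A by simp
    then have base: "eval_recf f (tl xs) = eval_recf f (tl ys)" using N1 unfolding depends_below_def by blast
    have "\<forall>i<N2. arg (r # k # tl xs) i = arg (r # k # tl ys) i" for r k
    proof (intro allI impI)
      fix i assume "i < N2"
      then show "arg (r # k # tl xs) i = arg (r # k # tl ys) i"
        using A by (cases i; cases "i - 1") auto
    qed
    then have "(\<lambda>k r. eval_recf g (r # k # tl xs)) = (\<lambda>k r. eval_recf g (r # k # tl ys))"
      using N2 unfolding depends_below_def by blast
    moreover have "arg xs 0 = arg ys 0" using A by auto
    ultimately show "eval_recf (Prf f g) xs = eval_recf (Prf f g) ys" by (simp only: eval_recf.simps base)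
  qed
qed

lemma primrec_fn_comp:
  assumes "primrec_fn h" and "\<forall>g\<in>set gs. primrec_fn g"
  shows "primrec_fn (\<lambda>xs. h (map (\<lambda>g. g xs) gs))"
proof -
  obtain f where f: "eval_recf f = h" using assms(1) unfolding primrec_fn_def by blast
  have "\<forall>g\<in>set gs. \<exists>f. g = eval_recf f" using assms(2) unfolding primrec_fn_def by auto
  then obtain fs where "gs = map eval_recf fs" unfolding ex_map_conv[symmetric] by blast
  with f show ?thesis unfolding primrec_fn_def by (intro exI[of _ "Cnf f fs"]) (auto simp: fun_eq_iff comp_def)
qed

lemma primrec_fn_rec:
  assumes "primrec_fn f" "primrec_fn g"
  shows "primrec_fn (\<lambda>xs. rec_nat (f (tl xs)) (\<lambda>k r. g (r # k # tl xs)) (arg xs 0))"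
proof -
  obtain a b where "eval_recf a = f" "eval_recf b = g" using assms unfolding primrec_fn_def by blast
  then show ?thesis unfolding primrec_fn_def by (intro exI[of _ "Prf a b"]) auto
qed

lemma primrec_fn_arg[intro]: "primrec_fn (\<lambda>xs. arg xs i)"
  unfolding primrec_fn_def by (intro exI[of _ "Idf i"]) (simp add: fun_eq_iff)

lemma primrec_fn_Suc[intro]: "primrec_fn g \<Longrightarrow> primrec_fn (\<lambda>xs. Suc (g xs))"
proof -
  assume "primrec_fn g"
  have "primrec_fn (\<lambda>xs. Suc (arg xs 0))"
    unfolding primrec_fn_def by (intro exI[of _ Sf]) (simp add: fun_eq_iff)
  from primrec_fn_comp[OF this, of "[g]"] \<open>primrec_fn g\<close> show ?thesis by simp
qed

lemma primrec_fn_const[intro]: "primrec_fn (\<lambda>xs. c)"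
proof (induction c)
  case 0 show ?case unfolding primrec_fn_def by (intro exI[of _ Zf]) (simp add: fun_eq_iff)
qed (rule primrec_fn_Suc)

text \<open>\<open>Cnf\<close> passes only a fixed finite list of arguments, so the remaining ones are
passed explicitly, as many as \<open>h\<close> depends on.\<close>

lemma primrec_fn_subst:
  assumes h: "primrec_fn h" and gs: "\<forall>g\<in>set gs. primrec_fn g"
  shows "primrec_fn (\<lambda>xs. h (map (\<lambda>g. g xs) gs @ drop k xs))"
proof -
  obtain N where N: "depends_below N h"
    using h eval_recf_depends_below unfolding primrec_fn_def by blast
  let ?gs = "gs @ map (\<lambda>i xs. arg xs (k + i)) [0..<N]"
  have eq: "h (map (\<lambda>g. g xs) gs @ drop k xs) = h (map (\<lambda>g. g xs) ?gs)" for xs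
  proof -
    have "\<forall>i<N. arg (map (\<lambda>g. g xs) gs @ drop k xs) i = arg (map (\<lambda>g. g xs) ?gs) i"
      by (auto simp: arg_append arg_drop arg_map_upt)
    then show ?thesis using N unfolding depends_below_def by blast
  qed
  have "primrec_fn (\<lambda>xs. h (map (\<lambda>g. g xs) ?gs))"
    using primrec_fn_comp[OF h, of ?gs] gs by auto
  then show ?thesis by (simp only: eq)
qed

lemma primrec_fn_Cons: "primrec_fn h \<Longrightarrow> primrec_fn g \<Longrightarrow> primrec_fn (\<lambda>xs. h (g xs # xs))"
  using primrec_fn_subst[of h "[g]" 0] by simp

lemma primrec_fn_drop: "primrec_fn h \<Longrightarrow> primrec_fn (\<lambda>xs. h (drop k xs))"
  using primrec_fn_subst[of h "[]" k] by simp

lemma primrec_fn_rec_nat: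
  assumes "primrec_fn b" "primrec_fn s" "primrec_fn t"
    and "\<And>xs. F xs = rec_nat (b xs) (\<lambda>k r. s (r # k # xs)) (t xs)"
  shows "primrec_fn F"
proof -
  have "primrec_fn (\<lambda>xs. rec_nat (b (tl xs)) (\<lambda>k r. s (r # k # tl xs)) (arg xs 0))"
    by (rule primrec_fn_rec[OF assms(1,2)])
  from primrec_fn_Cons[OF this assms(3)]
  have "primrec_fn (\<lambda>xs. rec_nat (b xs) (\<lambda>k r. s (r # k # xs)) (t xs))"
    by (simp only: list.sel arg_Cons0)
  moreover have "F = (\<lambda>xs. rec_nat (b xs) (\<lambda>k r. s (r # k # xs)) (t xs))"
    using assms(4) by auto
  ultimately show ?thesis by (simp only:)
qed

lemma rec_nat_add: "rec_nat a (\<lambda>k r. Suc r) n = a + n" by (induction n) auto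
lemma rec_nat_mult: "rec_nat 0 (\<lambda>k r. r + c) n = c * n" by (induction n) auto
lemma rec_nat_pred: "rec_nat 0 (\<lambda>k r. k) n = n - 1" by (induction n) auto
lemma rec_nat_diff: "rec_nat a (\<lambda>k r. r - 1) n = a - n" by (induction n) auto
lemma rec_nat_if: "rec_nat a (\<lambda>k r. b) n = (if n = 0 then a else b)" by (cases n) auto
lemma rec_nat_sum: "rec_nat 0 (\<lambda>k r. r + F k) n = (\<Sum>j<n. F j)" by (induction n) auto
lemma rec_nat_prod: "rec_nat 1 (\<lambda>k r. r * F k) n = (\<Prod>j<n. F j)"
  by (induction n) (auto simp: mult.commute)
lemma rec_nat_triangle: "rec_nat 0 (\<lambda>k r. r + Suc k) n = triangle n" by (induction n) auto

lemma drop_Suc_Suc_0_Cons: "drop (Suc (Suc 0)) (r # k # xs) = xs" by simp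

lemmas rec_nat_step_args = arg_Cons0 arg_ConsS drop_Suc_Suc_0_Cons

lemma primrec_fn_add[intro]:
  assumes f: "primrec_fn f" and g: "primrec_fn g" shows "primrec_fn (\<lambda>xs. f xs + g xs)"
  by (rule primrec_fn_rec_nat[of f "\<lambda>L. Suc (arg L 0)" g])
     (intro primrec_fn_Suc primrec_fn_arg f g | simp only: rec_nat_step_args rec_nat_add)+

lemma primrec_fn_mult[intro]:
  assumes f: "primrec_fn f" and g: "primrec_fn g" shows "primrec_fn (\<lambda>xs. f xs * g xs)"
  by (rule primrec_fn_rec_nat[of "\<lambda>xs. 0" "\<lambda>L. arg L 0 + f (drop (Suc (Suc 0)) L)" g])
     (intro primrec_fn_const primrec_fn_add primrec_fn_arg primrec_fn_drop f g
      | simp only: rec_nat_step_args rec_nat_mult)+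

lemma primrec_fn_pred: assumes f: "primrec_fn f" shows "primrec_fn (\<lambda>xs. f xs - 1)"
  by (rule primrec_fn_rec_nat[of "\<lambda>xs. 0" "\<lambda>L. arg L (Suc 0)" f])
     (intro primrec_fn_const primrec_fn_arg f | simp only: rec_nat_step_args rec_nat_pred)+

lemma primrec_fn_diff[intro]:
  assumes f: "primrec_fn f" and g: "primrec_fn g" shows "primrec_fn (\<lambda>xs. f xs - g xs)"
  by (rule primrec_fn_rec_nat[of f "\<lambda>L. arg L 0 - 1" g])
     (intro primrec_fn_pred primrec_fn_arg f g | simp only: rec_nat_step_args rec_nat_diff)+

lemma primrec_fn_if0[intro]:
  assumes c: "primrec_fn c" and a: "primrec_fn a" and b: "primrec_fn b"
  shows "primrec_fn (\<lambda>xs. if c xs = 0 then a xs else b xs)"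
  by (rule primrec_fn_rec_nat[of a "\<lambda>L. b (drop (Suc (Suc 0)) L)" c])
     (intro primrec_fn_drop a b c | simp only: rec_nat_step_args rec_nat_if)+

lemmas primrec_fn_arith = primrec_fn_arg primrec_fn_const primrec_fn_Suc primrec_fn_add
  primrec_fn_mult primrec_fn_diff primrec_fn_if0

lemma primrec_fn_if_eq[intro]:
  assumes "primrec_fn f" "primrec_fn g" "primrec_fn a" "primrec_fn b"
  shows "primrec_fn (\<lambda>xs. if f xs = g xs then a xs else b xs)"
proof -
  have "primrec_fn (\<lambda>xs. if (f xs - g xs) + (g xs - f xs) = 0 then a xs else b xs)"
    by (intro primrec_fn_arith assms)
  moreover have "(\<lambda>xs. if (f xs - g xs) + (g xs - f xs) = 0 then a xs else b xs)
      = (\<lambda>xs. if f xs = g xs then a xs else b xs)"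
    by (auto simp: fun_eq_iff)
  ultimately show ?thesis by simp
qed

lemma primrec_fn_if_less[intro]:
  assumes "primrec_fn f" "primrec_fn g" "primrec_fn a" "primrec_fn b"
  shows "primrec_fn (\<lambda>xs. if f xs < g xs then a xs else b xs)"
proof -
  have "primrec_fn (\<lambda>xs. if g xs - f xs = 0 then b xs else a xs)"
    by (intro primrec_fn_arith assms)
  moreover have "(\<lambda>xs. if g xs - f xs = 0 then b xs else a xs) = (\<lambda>xs. if f xs < g xs then a xs else b xs)"
    by (auto simp: fun_eq_iff)
  ultimately show ?thesis by simp
qed

lemma primrec_fn_shift:
  "primrec_fn (\<lambda>L. h (arg L 0) (tl L)) \<Longrightarrow> primrec_fn (\<lambda>L. h (arg L (Suc 0)) (drop (Suc (Suc 0)) L))"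
  using primrec_fn_subst[of "\<lambda>L. h (arg L 0) (tl L)" "[\<lambda>L. arg L (Suc 0)]" "Suc (Suc 0)"]
  by (simp del: drop_Suc_Cons add: primrec_fn_arg)

lemma primrec_fn_sum[intro]:
  assumes h: "primrec_fn (\<lambda>L. h (arg L 0) (tl L))" and t: "primrec_fn t"
  shows "primrec_fn (\<lambda>xs. \<Sum>j<t xs. h j xs)"
  by (rule primrec_fn_rec_nat[of "\<lambda>xs. 0" "\<lambda>L. arg L 0 + h (arg L (Suc 0)) (drop (Suc (Suc 0)) L)" t])
     (intro primrec_fn_const primrec_fn_add primrec_fn_arg primrec_fn_shift h t
      | simp only: rec_nat_step_args rec_nat_sum)+

lemma primrec_fn_prod[intro]:
  assumes h: "primrec_fn (\<lambda>L. h (arg L 0) (tl L))" and t: "primrec_fn t"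
  shows "primrec_fn (\<lambda>xs. \<Prod>j<t xs. h j xs)"
  by (rule primrec_fn_rec_nat[of "\<lambda>xs. 1" "\<lambda>L. arg L 0 * h (arg L (Suc 0)) (drop (Suc (Suc 0)) L)" t])
     (intro primrec_fn_const primrec_fn_mult primrec_fn_arg primrec_fn_shift h t
      | simp only: rec_nat_step_args rec_nat_prod)+

lemma primrec_fn_triangle[intro]: assumes g: "primrec_fn g" shows "primrec_fn (\<lambda>xs. triangle (g xs))"
  by (rule primrec_fn_rec_nat[of "\<lambda>xs. 0" "\<lambda>L. arg L 0 + Suc (arg L (Suc 0))" g])
     (intro primrec_fn_arith g | simp only: rec_nat_step_args rec_nat_triangle)+

lemma primrec_fn_eval_recf[intro]:
  "primrec_fn g \<Longrightarrow> primrec_fn h \<Longrightarrow> primrec_fn (\<lambda>xs. eval_recf f [g xs, h xs])"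
  using primrec_fn_comp[of "eval_recf f" "[g, h]"] unfolding primrec_fn_def by auto

lemma primrec_fn_comp2:
  "primrec_fn (\<lambda>L. F (arg L 0) (arg L (Suc 0))) \<Longrightarrow> primrec_fn g \<Longrightarrow> primrec_fn h \<Longrightarrow>
    primrec_fn (\<lambda>xs. F (g xs) (h xs))"
  using primrec_fn_comp[of "\<lambda>L. F (arg L 0) (arg L (Suc 0))" "[g, h]"] by simp

section \<open>Decoding pairs and lists\<close>

text \<open>\<open>tri_root n\<close> is the largest \<open>k\<close> with \<open>triangle k \<le> n\<close>.\<close>

primrec tri_root :: "nat \<Rightarrow> nat" where
  "tri_root 0 = 0"
| "tri_root (Suc n) =
     (if tri_root n - (n - triangle (tri_root n)) = 0 then Suc (tri_root n) else tri_root n)"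

lemma tri_root_bounds: "triangle (tri_root n) \<le> n \<and> n \<le> triangle (tri_root n) + tri_root n"
  by (induction n) auto

lemma prod_decode_tri_root:
  "prod_decode n = (n - triangle (tri_root n), tri_root n - (n - triangle (tri_root n)))"
proof -
  have "prod_encode (n - triangle (tri_root n), tri_root n - (n - triangle (tri_root n))) = n"
    using tri_root_bounds[of n] by (simp add: prod_encode_def)
  then show ?thesis by (metis prod_encode_inverse)
qed

lemma rec_nat_tri_root:
  "rec_nat 0 (\<lambda>k r. if r - (k - triangle r) = 0 then Suc r else r) n = tri_root n"
  by (induction n) auto

lemma primrec_fn_tri_root[intro]: assumes g: "primrec_fn g" shows "primrec_fn (\<lambda>xs. tri_root (g xs))"
  by (rule primrec_fn_rec_nat[of "\<lambda>xs. 0"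
        "\<lambda>L. if arg L 0 - (arg L (Suc 0) - triangle (arg L 0)) = 0 then Suc (arg L 0) else arg L 0" g])
     (intro primrec_fn_arith primrec_fn_triangle g | simp only: rec_nat_step_args rec_nat_tri_root)+

lemma primrec_fn_fst_prod_decode[intro]:
  assumes g: "primrec_fn g" shows "primrec_fn (\<lambda>xs. fst (prod_decode (g xs)))"
  by (subst prod_decode_tri_root, simp only: fst_conv) (intro primrec_fn_arith primrec_fn_triangle primrec_fn_tri_root g)

lemma primrec_fn_snd_prod_decode[intro]:
  assumes g: "primrec_fn g" shows "primrec_fn (\<lambda>xs. snd (prod_decode (g xs)))"
  by (subst prod_decode_tri_root, simp only: snd_conv) (intro primrec_fn_arith primrec_fn_triangle primrec_fn_tri_root g)

definition code_hd :: "nat \<Rightarrow> nat" where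
  "code_hd c = (if c = 0 then 0 else fst (prod_decode (c - 1)))"

definition code_tl :: "nat \<Rightarrow> nat" where
  "code_tl c = (if c = 0 then 0 else snd (prod_decode (c - 1)))"

definition code_nth :: "nat \<Rightarrow> nat \<Rightarrow> nat" where
  "code_nth c j = code_hd ((code_tl ^^ j) c)"

lemma code_nth_eq_arg: "code_nth c j = arg (list_decode c) j"
proof (induction j arbitrary: c)
  case 0 then show ?case by (cases c) (auto simp: code_nth_def code_hd_def split: prod.split)
next
  case (Suc j)
  have tl0: "(code_tl ^^ j) 0 = 0" for j by (induction j) (auto simp: code_tl_def)
  show ?case
  proof (cases c)
    case 0 then show ?thesis by (simp add: code_nth_def tl0 code_hd_def code_tl_def)
  next
    case (Suc m)
    have "code_nth c (Suc j) = code_nth (code_tl c) j"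
      by (simp only: code_nth_def funpow_Suc_right comp_def)
    also have "\<dots> = arg (list_decode (code_tl c)) j" by (rule Suc.IH)
    also have "\<dots> = arg (list_decode c) (Suc j)" using Suc by (simp add: code_tl_def split: prod.split)
    finally show ?thesis .
  qed
qed

lemma primrec_fn_code_hd[intro]: assumes g: "primrec_fn g" shows "primrec_fn (\<lambda>xs. code_hd (g xs))"
  unfolding code_hd_def by (intro primrec_fn_arith primrec_fn_fst_prod_decode g)

lemma primrec_fn_code_tl[intro]: assumes g: "primrec_fn g" shows "primrec_fn (\<lambda>xs. code_tl (g xs))"
  unfolding code_tl_def by (intro primrec_fn_arith primrec_fn_snd_prod_decode g)

lemma primrec_fn_code_nth[intro]:
  assumes g: "primrec_fn g" and h: "primrec_fn h"
  shows "primrec_fn (\<lambda>xs. code_nth (g xs) (h xs))"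
proof -
  have iter: "rec_nat c (\<lambda>k r. code_tl r) n = (code_tl ^^ n) c" for c n by (induction n) auto
  have "primrec_fn (\<lambda>xs. (code_tl ^^ h xs) (g xs))"
    by (rule primrec_fn_rec_nat[of g "\<lambda>L. code_tl (arg L 0)" h])
       (intro primrec_fn_code_tl primrec_fn_arg g h | simp only: rec_nat_step_args iter)+
  then show ?thesis unfolding code_nth_def by (rule primrec_fn_code_hd)
qed

lemma primrec_fn_arg_tl: "primrec_fn (\<lambda>xs. arg (tl xs) i)" "primrec_fn (\<lambda>xs. arg (tl (tl xs)) i)"
  by (simp_all only: arg_tl primrec_fn_arg)

lemmas primrec_fn_intros = primrec_fn_arg_tl primrec_fn_arith primrec_fn_if_eq primrec_fn_if_less
  primrec_fn_sum primrec_fn_prod primrec_fn_fst_prod_decode primrec_fn_snd_prod_decode primrec_fn_code_hd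
  primrec_fn_code_tl primrec_fn_code_nth primrec_fn_eval_recf

section \<open>Deciding whether a rational point lies in a rational ball\<close>

definition rat_sign :: "nat \<Rightarrow> nat" where "rat_sign k = fst (prod_decode k)"
definition rat_num :: "nat \<Rightarrow> nat" where "rat_num k = fst (prod_decode (snd (prod_decode k)))"
definition rat_den :: "nat \<Rightarrow> nat" where "rat_den k = Suc (snd (prod_decode (snd (prod_decode k))))"

lemma rat_of_code_eq:
  "rat_of_code k = (if rat_sign k = 0 then 1 else -1) * real (rat_num k) / real (rat_den k)"
  unfolding rat_of_code_def rat_sign_def rat_num_def rat_den_def by (simp split: prod.split)

lemma rat_of_code_surj: "(q::real) \<in> \<rat> \<Longrightarrow> \<exists>k. rat_of_code k = q"
proof -
  assume "q \<in> \<rat>"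
  then obtain i :: int and m :: nat where m: "m \<noteq> 0" and q: "q = real_of_int i / real m"
    unfolding Rats_eq_int_div_nat by auto
  define k where "k = prod_encode (if i \<ge> 0 then 0 else 1, prod_encode (nat \<bar>i\<bar>, m - 1))"
  have "rat_of_code k = (if i \<ge> 0 then 1 else -1) * real (nat \<bar>i\<bar>) / real m"
    using m unfolding rat_of_code_eq k_def rat_sign_def rat_num_def rat_den_def by simp
  also have "\<dots> = q" unfolding q by (cases "i \<ge> 0") auto
  finally show ?thesis by blast
qed

definition rat_dist_num :: "nat \<Rightarrow> nat \<Rightarrow> nat" where
  "rat_dist_num k1 k2 =
    (let a = rat_num k1 * rat_den k2; b = rat_num k2 * rat_den k1
     in if rat_sign k1 = 0 then (if rat_sign k2 = 0 then (a - b) + (b - a) else a + b)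
        else (if rat_sign k2 = 0 then a + b else (a - b) + (b - a)))"

definition rat_dist_den :: "nat \<Rightarrow> nat \<Rightarrow> nat" where
  "rat_dist_den k1 k2 = rat_den k1 * rat_den k2"

lemma of_nat_absdiff: "real (a - b) + real (b - a) = \<bar>real a - real b\<bar>"
  by (cases "a \<le> b") (auto simp: of_nat_diff)

lemma abs_diff_rat_of_code:
  "\<bar>rat_of_code k1 - rat_of_code k2\<bar> = real (rat_dist_num k1 k2) / real (rat_dist_den k1 k2)"
proof -
  define p1 p2 d1 d2 where "p1 = real (rat_num k1)" "p2 = real (rat_num k2)"
    "d1 = real (rat_den k1)" "d2 = real (rat_den k2)"
  define s1 s2 :: real where "s1 = (if rat_sign k1 = 0 then 1 else -1)"
    "s2 = (if rat_sign k2 = 0 then 1 else -1)"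
  have pos: "d1 > 0" "d2 > 0" "p1 \<ge> 0" "p2 \<ge> 0" by (auto simp: p1_p2_d1_d2_def rat_den_def)
  have dist: "\<bar>rat_of_code k1 - rat_of_code k2\<bar> = \<bar>s1 * p1 * d2 - s2 * p2 * d1\<bar> / (d1 * d2)"
    using pos by (simp add: rat_of_code_eq p1_p2_d1_d2_def s1_s2_def field_simps abs_divide)
  have "p1 * d2 \<ge> 0" "p2 * d1 \<ge> 0" using pos by simp_all
  moreover have "real (rat_num k1 * rat_den k2) = p1 * d2" "real (rat_num k2 * rat_den k1) = p2 * d1"
    by (simp_all add: p1_p2_d1_d2_def)
  ultimately have "\<bar>s1 * p1 * d2 - s2 * p2 * d1\<bar> = real (rat_dist_num k1 k2)"
    unfolding rat_dist_num_def Let_def s1_s2_def by (auto simp del: of_nat_mult simp: of_nat_absdiff)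
  with dist show ?thesis by (simp add: rat_dist_den_def p1_p2_d1_d2_def)
qed

text \<open>Clearing denominators: with \<open>\<bar>u_j - v_j\<bar> = coord_dist_num u v j / coord_dist_den u v j\<close>,
the squared distance of the coordinate lists \<open>u, v\<close> is \<open>sq_dist_num n u v / den_prod n u v\<close>.\<close>

definition coord_dist_num :: "nat \<Rightarrow> nat \<Rightarrow> nat \<Rightarrow> nat" where
  "coord_dist_num u v j = rat_dist_num (code_nth u j) (code_nth v j)"

definition coord_dist_den :: "nat \<Rightarrow> nat \<Rightarrow> nat \<Rightarrow> nat" where
  "coord_dist_den u v j = rat_dist_den (code_nth u j) (code_nth v j)"

definition den_prod :: "nat \<Rightarrow> nat \<Rightarrow> nat \<Rightarrow> nat" where
  "den_prod n u v = (\<Prod>k<n. coord_dist_den u v k * coord_dist_den u v k)"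

definition den_prod_except :: "nat \<Rightarrow> nat \<Rightarrow> nat \<Rightarrow> nat \<Rightarrow> nat" where
  "den_prod_except n u v j = (\<Prod>k<n. if k = j then 1 else coord_dist_den u v k * coord_dist_den u v k)"

definition sq_dist_num :: "nat \<Rightarrow> nat \<Rightarrow> nat \<Rightarrow> nat" where
  "sq_dist_num n u v =
    (\<Sum>j<n. coord_dist_num u v j * coord_dist_num u v j * den_prod_except n u v j)"

definition in_ball_test :: "nat \<Rightarrow> nat \<Rightarrow> nat \<Rightarrow> nat" where
  "in_ball_test n e a =
    (let c = fst (prod_decode a); r = snd (prod_decode a); v = fst (prod_decode e)
     in if rat_sign r = 0 then
          (if sq_dist_num n c v * (rat_den r * rat_den r) < rat_num r * rat_num r * den_prod n c v
           then 0 else 1)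
        else 1)"

lemma primrec_fn_in_ball_test[intro]:
  assumes "primrec_fn g" "primrec_fn h"
  shows "primrec_fn (\<lambda>xs. in_ball_test n (g xs) (h xs))"
  unfolding in_ball_test_def sq_dist_num_def den_prod_def den_prod_except_def coord_dist_num_def
    coord_dist_den_def rat_dist_num_def rat_dist_den_def rat_sign_def rat_num_def rat_den_def Let_def
  by (rule primrec_fn_comp2[OF _ assms]) (intro primrec_fn_intros)

lemma sum_sq_frac_less_iff:
  fixes A B :: "nat \<Rightarrow> nat" and p d n :: nat
  assumes B: "\<And>j. B j > 0" and d: "d > 0"
  shows "(\<Sum>j<n. (real (A j) / real (B j))^2) < (real p / real d)^2 \<longleftrightarrow>
    (\<Sum>j<n. A j * A j * (\<Prod>k<n. if k = j then 1 else B k * B k)) * (d * d)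
      < p * p * (\<Prod>k<n. B k * B k)"
proof -
  define P where "P = (\<Prod>k<n. B k * B k)"
  define Q where "Q j = (\<Prod>k<n. if k = j then 1 else B k * B k)" for j
  have Ppos: "real P > 0" unfolding P_def using B by (simp add: prod_pos)
  have QP: "Q j * (B j * B j) = P" if "j < n" for j
  proof -
    have "(\<Prod>k<n. B k * B k) = (B j * B j) * (\<Prod>k\<in>{..<n} - {j}. B k * B k)"
      using that by (subst prod.remove[of _ j]) auto
    moreover have "(\<Prod>k<n. (if k = j then 1 else B k * B k)) = (\<Prod>k\<in>{..<n} - {j}. B k * B k)"
      using that by (subst prod.remove[of _ j]) (auto intro!: prod.cong)
    ultimately show ?thesis unfolding P_def Q_def by simp
  qed
  have "(real (A j) / real (B j))^2 = real (A j * A j * Q j) / real P" if "j < n" for j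
  proof -
    have "real P = real (Q j) * real (B j) * real (B j)"
      using QP[OF that] by (metis of_nat_mult mult.assoc)
    moreover have "Q j \<noteq> 0" using QP[OF that] Ppos by auto
    ultimately show ?thesis using B[of j] by (simp add: field_simps power2_eq_square)
  qed
  then have "(\<Sum>j<n. (real (A j) / real (B j))^2) = real (\<Sum>j<n. A j * A j * Q j) / real P"
    by (simp add: sum_divide_distrib)
  moreover have "real (\<Sum>j<n. A j * A j * Q j) / real P < (real p / real d)^2 \<longleftrightarrow>
      real ((\<Sum>j<n. A j * A j * Q j) * (d * d)) < real (p * p * P)"
    using Ppos d by (simp add: field_simps power2_eq_square)
  ultimately show ?thesis unfolding P_def Q_def of_nat_less_iff by simp
qed

definition center :: "nat \<Rightarrow> real ^ 'n::finite" where
  "center e = (\<chi> i. rat_of_code (arg (list_decode (fst (prod_decode e))) (coord_idx i)))"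

definition radius :: "nat \<Rightarrow> real" where
  "radius a = rat_of_code (snd (prod_decode a))"

lemma beta_eq: "beta a = ball (center a) (radius a)"
  unfolding beta_def center_def radius_def by (simp split: prod.split)

lemma bij_coord_idx: "bij_betw (coord_idx :: 'n::finite \<Rightarrow> nat) UNIV {..<CARD('n)}"
proof -
  have "\<exists>f. bij_betw f (UNIV :: 'n set) {..<CARD('n)}"
    by (rule finite_same_card_bij) auto
  then show ?thesis unfolding coord_idx_def by (rule someI_ex)
qed

lemma coord_idx_less: "coord_idx (i :: 'n::finite) < CARD('n)"
  and inv_coord_idx_coord_idx: "inv_into UNIV coord_idx (coord_idx i) = i"
  and coord_idx_inv_coord_idx: "j < CARD('n) \<Longrightarrow> coord_idx (inv_into UNIV coord_idx j :: 'n) = j"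
proof -
  have "bij_betw (coord_idx :: 'n \<Rightarrow> nat) UNIV {..<CARD('n)}" by (rule bij_coord_idx)
  then show "coord_idx i < CARD('n)" "inv_into UNIV coord_idx (coord_idx i) = i"
    and "j < CARD('n) \<Longrightarrow> coord_idx (inv_into UNIV coord_idx j :: 'n) = j"
    by (auto simp: bij_betw_def f_inv_into_f)
qed

lemma sum_coord_idx:
  "(\<Sum>j<CARD('n). f (inv_into UNIV coord_idx j)) = (\<Sum>i\<in>UNIV. f (i :: 'n::finite))"
proof -
  have bij: "bij_betw (coord_idx :: 'n \<Rightarrow> nat) UNIV {..<CARD('n)}" by (rule bij_coord_idx)
  show ?thesis using sum.reindex_bij_betw[OF bij, of "\<lambda>j. f (inv_into UNIV coord_idx j)"]
    by (simp add: inv_coord_idx_coord_idx)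
qed

lemma dist_less_iff_sum_coord_idx:
  fixes x y :: "real ^ 'n::finite"
  shows "dist x y < R \<longleftrightarrow>
    (\<Sum>j<CARD('n). (x $ inv_into UNIV coord_idx j - y $ inv_into UNIV coord_idx j)^2) < R^2 \<and> 0 < R"
proof -
  have "dist x y = sqrt (\<Sum>j<CARD('n). (x $ inv_into UNIV coord_idx j - y $ inv_into UNIV coord_idx j)^2)"
    by (simp add: sum_coord_idx[of "\<lambda>i. (x $ i - y $ i)^2"] dist_vec_def L2_set_def dist_real_def)
  moreover have "sqrt s < R \<longleftrightarrow> s < R^2 \<and> 0 < R" if "0 \<le> s" for s
    using real_sqrt_less_iff[of s "R^2"] real_sqrt_ge_zero[OF that] by (cases "0 < R") (simp, linarith)
  ultimately show ?thesis by (simp add: sum_nonneg)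
qed

lemma center_nth_coord_idx:
  assumes "j < CARD('n)"
  shows "(center e :: real ^ 'n::finite) $ inv_into UNIV coord_idx j = rat_of_code (code_nth (fst (prod_decode e)) j)"
  using coord_idx_inv_coord_idx[OF assms] by (simp add: center_def code_nth_eq_arg)

lemma center_mem_beta_iff:
  "(center e :: real ^ 'n::finite) \<in> beta a \<longleftrightarrow>
    (\<Sum>j<CARD('n). (real (coord_dist_num (fst (prod_decode a)) (fst (prod_decode e)) j)
        / real (coord_dist_den (fst (prod_decode a)) (fst (prod_decode e)) j))^2) < (radius a)^2
      \<and> 0 < radius a"
proof -
  have "(rat_of_code (code_nth u j) - rat_of_code (code_nth v j))^2
      = (real (coord_dist_num u v j) / real (coord_dist_den u v j))^2" for u v j
    by (subst power2_abs[symmetric]) (simp only: abs_diff_rat_of_code coord_dist_num_def coord_dist_den_def)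
  then show ?thesis
    by (simp add: beta_eq dist_less_iff_sum_coord_idx center_nth_coord_idx)
qed

lemma in_ball_test_iff: "in_ball_test CARD('n) e a = 0 \<longleftrightarrow> (center e :: real ^ 'n::finite) \<in> beta a"
proof -
  define u v r where "u = fst (prod_decode a)" "v = fst (prod_decode e)" "r = snd (prod_decode a)"
  define \<Sigma> where "\<Sigma> = (\<Sum>j<CARD('n). (real (coord_dist_num u v j) / real (coord_dist_den u v j))^2)"
  have mem: "(center e :: real ^ 'n) \<in> beta a \<longleftrightarrow> \<Sigma> < (radius a)^2 \<and> 0 < radius a"
    unfolding \<Sigma>_def u_v_r_def by (rule center_mem_beta_iff)
  show ?thesis
  proof (cases "rat_sign r = 0")
    case True
    then have rad: "radius a = real (rat_num r) / real (rat_den r)"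
      by (simp add: radius_def rat_of_code_eq u_v_r_def)
    have "\<Sigma> \<ge> 0" unfolding \<Sigma>_def by (simp add: sum_nonneg)
    then have "(center e :: real ^ 'n) \<in> beta a \<longleftrightarrow> \<Sigma> < (real (rat_num r) / real (rat_den r))^2"
      unfolding mem rad by (cases "rat_num r = 0") (auto simp: zero_less_divide_iff rat_den_def)
    also have "\<dots> \<longleftrightarrow> sq_dist_num CARD('n) u v * (rat_den r * rat_den r)
        < rat_num r * rat_num r * den_prod CARD('n) u v"
      unfolding \<Sigma>_def sq_dist_num_def den_prod_def den_prod_except_def
      by (rule sum_sq_frac_less_iff) (simp_all add: coord_dist_den_def rat_dist_den_def rat_den_def)
    finally show ?thesis using True by (simp add: in_ball_test_def Let_def u_v_r_def)
  next
    case False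
    then have "radius a \<le> 0" by (simp add: radius_def rat_of_code_eq u_v_r_def)
    then show ?thesis using False by (simp add: mem in_ball_test_def Let_def u_v_r_def)
  qed
qed

lemma center_surj:
  fixes q :: "real ^ 'n::finite"
  assumes "\<And>i. q $ i \<in> \<rat>"
  shows "\<exists>e. center e = q"
proof -
  have "\<forall>i. \<exists>k. rat_of_code k = q $ i" using rat_of_code_surj assms by blast
  then obtain k where k: "\<And>i. rat_of_code (k i) = q $ i" by metis
  define L where "L = map (\<lambda>j. k (inv_into UNIV (coord_idx :: 'n \<Rightarrow> nat) j)) [0..<CARD('n)]"
  have "(center (prod_encode (list_encode L, 0)) :: real ^ 'n) = q"
    unfolding center_def L_def by (simp add: vec_eq_iff arg.simps coord_idx_less inv_coord_idx_coord_idx k)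
  then show ?thesis by blast
qed

lemma rational_vector_approximation:
  fixes x :: "real ^ 'n::finite"
  assumes "\<epsilon> > 0"
  obtains q where "\<And>i. q $ i \<in> \<rat>" "dist x q < \<epsilon>"
proof -
  have "\<forall>i. \<exists>r. r \<in> \<rat> \<and> \<bar>r - x $ i\<bar> < \<epsilon> / CARD('n)"
    using rational_approximation[of "\<epsilon> / CARD('n)"] assms by (metis of_nat_0_less_iff zero_less_card_finite divide_pos_pos)
  then obtain r where r: "\<And>i. r i \<in> \<rat>" "\<And>i. \<bar>r i - x $ i\<bar> < \<epsilon> / CARD('n)"
    by metis
  have "dist x (\<chi> i. r i) \<le> (\<Sum>i\<in>UNIV. \<bar>(x - (\<chi> i. r i)) $ i\<bar>)"
    unfolding dist_norm by (rule norm_le_l1_cart)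
  also have "\<dots> < (\<Sum>i\<in>(UNIV::'n set). \<epsilon> / CARD('n))"
    by (rule sum_strict_mono) (use r in \<open>auto simp: abs_minus_commute\<close>)
  finally show ?thesis using r that[of "\<chi> i. r i"] by simp
qed

lemma ex_center_in_open:
  fixes S :: "(real ^ 'n::finite) set"
  assumes "open S" "S \<noteq> {}"
  shows "\<exists>e. center e \<in> S"
proof -
  obtain x \<epsilon> where \<epsilon>: "\<epsilon> > 0" "ball x \<epsilon> \<subseteq> S" using assms open_contains_ball by blast
  obtain q :: "real ^ 'n" where q: "\<And>i. q $ i \<in> \<rat>" "dist x q < \<epsilon>"
    using rational_vector_approximation[OF \<epsilon>(1)] by blast
  obtain e where "center e = q" using center_surj q(1) by blast
  then show ?thesis using q(2) \<epsilon>(2) by auto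
qed

section \<open>Chains of overlapping balls\<close>

inductive_set ball_chain :: "nat \<Rightarrow> nat set \<Rightarrow> nat \<Rightarrow> nat set" for n W a0 where
  start: "a0 \<in> W \<Longrightarrow> a0 \<in> ball_chain n W a0"
| step: "a \<in> ball_chain n W a0 \<Longrightarrow> b \<in> W \<Longrightarrow> in_ball_test n e a = 0 \<Longrightarrow> in_ball_test n e b = 0
    \<Longrightarrow> b \<in> ball_chain n W a0"

text \<open>A certificate \<open>\<langle>m, c\<rangle>\<close> for \<open>x \<in> ball_chain n W a0\<close> codes a list whose \<open>i\<close>-th entry
is \<open>\<langle>b_i, y_i, e_i\<rangle>\<close>: the chain \<open>a0 = b_0, \<dots>, b_m = x\<close>, witnesses \<open>y_i\<close> for
\<open>b_i \<in> W = {x. \<exists>y. eval_recf f0 [x, y] = 0}\<close>, and codes \<open>e_i\<close> of points common to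
\<open>b_{i-1}\<close> and \<open>b_i\<close>.\<close>

definition chain_ball :: "nat \<Rightarrow> nat \<Rightarrow> nat" where
  "chain_ball c i = fst (prod_decode (code_nth c i))"

definition chain_wit :: "nat \<Rightarrow> nat \<Rightarrow> nat" where
  "chain_wit c i = fst (prod_decode (snd (prod_decode (code_nth c i))))"

definition chain_pt :: "nat \<Rightarrow> nat \<Rightarrow> nat" where
  "chain_pt c i = snd (prod_decode (snd (prod_decode (code_nth c i))))"

definition chain_link :: "nat \<Rightarrow> recf \<Rightarrow> nat \<Rightarrow> nat \<Rightarrow> nat" where
  "chain_link n f0 c i = eval_recf f0 [chain_ball c i, chain_wit c i] +
    (if i = 0 then 0
     else in_ball_test n (chain_pt c i) (chain_ball c (i - 1)) + in_ball_test n (chain_pt c i) (chain_ball c i))"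

definition chain_check :: "nat \<Rightarrow> nat \<Rightarrow> recf \<Rightarrow> nat \<Rightarrow> nat \<Rightarrow> nat" where
  "chain_check n a0 f0 x z =
    (if chain_ball (snd (prod_decode z)) 0 = a0 then
      (if chain_ball (snd (prod_decode z)) (fst (prod_decode z)) = x then
        (\<Sum>i<Suc (fst (prod_decode z)). chain_link n f0 (snd (prod_decode z)) i)
       else 1)
     else 1)"

lemma chain_check_eq_0_iff:
  "chain_check n a0 f0 x (prod_encode (m, c)) = 0 \<longleftrightarrow>
    chain_ball c 0 = a0 \<and> chain_ball c m = x \<and> (\<forall>i\<le>m. chain_link n f0 c i = 0)"
  by (auto simp: chain_check_def lessThan_Suc_atMost)

lemma chain_link_eq_0_iff:
  "chain_link n f0 c i = 0 \<longleftrightarrow> eval_recf f0 [chain_ball c i, chain_wit c i] = 0 \<and>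
    (i \<noteq> 0 \<longrightarrow> in_ball_test n (chain_pt c i) (chain_ball c (i - 1)) = 0 \<and>
      in_ball_test n (chain_pt c i) (chain_ball c i) = 0)"
  by (simp add: chain_link_def)

lemma ce_chain_check: "ce {x. \<exists>z. chain_check n a0 f0 x z = 0}"
proof -
  have "primrec_fn (\<lambda>L. chain_check n a0 f0 (arg L 0) (arg L (Suc 0)))"
    unfolding chain_check_def chain_link_def chain_ball_def chain_wit_def chain_pt_def
    by (intro primrec_fn_intros primrec_fn_in_ball_test)
  then obtain f where "eval_recf f = (\<lambda>L. chain_check n a0 f0 (arg L 0) (arg L (Suc 0)))"
    unfolding primrec_fn_def by blast
  then show ?thesis unfolding ce_def by (intro exI[of _ f]) auto
qed

lemma chain_check_imp_ball_chain:
  assumes W: "W = {x. \<exists>y. eval_recf f0 [x, y] = 0}"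
    and "chain_check n a0 f0 x (prod_encode (m, c)) = 0"
  shows "x \<in> ball_chain n W a0"
proof -
  have ends: "chain_ball c 0 = a0" "chain_ball c m = x"
    and links: "\<And>i. i \<le> m \<Longrightarrow> chain_link n f0 c i = 0"
    using assms(2) unfolding chain_check_eq_0_iff by auto
  have "chain_ball c i \<in> ball_chain n W a0" if "i \<le> m" for i
    using that
  proof (induction i)
    case 0
    then show ?case using links[of 0] ends(1) W by (auto simp: chain_link_eq_0_iff intro: ball_chain.start)
  next
    case (Suc i)
    then show ?case using links[OF Suc.prems] W
      by (auto simp: chain_link_eq_0_iff intro: ball_chain.step)
  qed
  then show ?thesis using ends(2) by blast
qed

lemma ball_chain_imp_chain_check:
  assumes W: "W = {x. \<exists>y. eval_recf f0 [x, y] = 0}"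
    and "x \<in> ball_chain n W a0"
  shows "\<exists>m c. chain_check n a0 f0 x (prod_encode (m, c)) = 0"
  using assms(2)
proof (induction rule: ball_chain.induct)
  case start
  then obtain y where "eval_recf f0 [a0, y] = 0" using W by blast
  then have "chain_check n a0 f0 a0 (prod_encode (0, list_encode [prod_encode (a0, prod_encode (y, 0))])) = 0"
    by (simp add: chain_check_eq_0_iff chain_link_def chain_ball_def chain_wit_def code_nth_eq_arg
        del: list_encode.simps)
  then show ?case by blast
next
  case (step a b e)
  then obtain m c where "chain_check n a0 f0 a (prod_encode (m, c)) = 0" by blast
  then have ends: "chain_ball c 0 = a0" "chain_ball c m = a"
    and links: "\<And>i. i \<le> m \<Longrightarrow> chain_link n f0 c i = 0"
    unfolding chain_check_eq_0_iff by auto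
  obtain y where y: "eval_recf f0 [b, y] = 0" using step.hyps(2) W by blast
  define c' where "c' = list_encode (map (code_nth c) [0..<Suc m] @ [prod_encode (b, prod_encode (y, e))])"
  have nth: "code_nth c' i = (if i \<le> m then code_nth c i else prod_encode (b, prod_encode (y, e)))"
    if "i \<le> Suc m" for i
    using that unfolding c'_def code_nth_eq_arg by (auto simp: arg.simps nth_append)
  have "chain_link n f0 c' i = chain_link n f0 c i" if "i \<le> m" for i
    using that by (auto simp: chain_link_def chain_ball_def chain_wit_def chain_pt_def nth)
  moreover have "chain_link n f0 c' (Suc m) = 0"
    using ends(2) step.hyps(3,4) y by (simp add: chain_link_def chain_ball_def chain_wit_def chain_pt_def nth)
  ultimately have "\<forall>i\<le>Suc m. chain_link n f0 c' i = 0" using links by (auto simp: le_Suc_eq)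
  moreover have "chain_ball c' 0 = a0" "chain_ball c' (Suc m) = b"
    using ends(1) by (simp_all add: chain_ball_def nth)
  ultimately show ?case unfolding chain_check_eq_0_iff by blast
qed

lemma ce_ball_chain: "ce W \<Longrightarrow> ce (ball_chain n W a0)"
proof -
  assume "ce W"
  then obtain f0 where W: "W = {x. \<exists>y. eval_recf f0 [x, y] = 0}" unfolding ce_def by blast
  have "x \<in> ball_chain n W a0 \<longleftrightarrow> (\<exists>z. chain_check n a0 f0 x z = 0)" for x
  proof
    assume "\<exists>z. chain_check n a0 f0 x z = 0"
    then obtain z where "chain_check n a0 f0 x (prod_encode (prod_decode z)) = 0" by auto
    then show "x \<in> ball_chain n W a0"
      using chain_check_imp_ball_chain[OF W] by (metis prod.collapse)
  qed (use ball_chain_imp_chain_check[OF W] in blast)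
  then have "ball_chain n W a0 = {x. \<exists>z. chain_check n a0 f0 x z = 0}" by blast
  then show ?thesis using ce_chain_check by simp
qed

section \<open>Components as unions of chains of balls\<close>

lemma component_eq_Union_overlap_closed:
  fixes B :: "'i \<Rightarrow> 'a::topological_space set"
  assumes C: "C \<in> components U" and U: "U = (\<Union>a\<in>W. B a)" and open_B: "\<And>a. open (B a)"
    and R_sub: "\<And>a. a \<in> R \<Longrightarrow> B a \<subseteq> C" and "j \<in> R" "B j \<noteq> {}"
    and R_closed: "\<And>a b. a \<in> R \<Longrightarrow> b \<in> W \<Longrightarrow> B a \<inter> B b \<noteq> {} \<Longrightarrow> b \<in> R"
  shows "C = (\<Union>a\<in>R. B a)"
proof
  show "(\<Union>a\<in>R. B a) \<subseteq> C" using R_sub by blast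
next
  define V V' where "V = (\<Union>a\<in>R. B a)" and "V' = (\<Union>a\<in>W - R. B a)"
  have "open V" "open V'" unfolding V_def V'_def using open_B by blast+
  moreover have cover: "C \<subseteq> V \<union> V'" using in_components_subset[OF C] U unfolding V_def V'_def by blast
  moreover have "V \<inter> V' \<inter> C = {}" unfolding V_def V'_def using R_closed by blast
  ultimately have "V \<inter> C = {} \<or> V' \<inter> C = {}"
    using connectedD[OF in_components_connected[OF C]] by blast
  moreover have "V \<inter> C \<noteq> {}" using \<open>j \<in> R\<close> \<open>B j \<noteq> {}\<close> R_sub unfolding V_def V'_def by blast
  ultimately show "C \<subseteq> (\<Union>a\<in>R. B a)" using cover unfolding V_def V'_def by blast
qed

lemma ball_chain_subset_component:
  assumes C: "C \<in> components U" and U: "U = (\<Union>a\<in>W. beta a)" and "beta a0 \<inter> C \<noteq> {}"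
    and "a \<in> ball_chain CARD('n) W a0"
  shows "(beta a :: (real ^ 'n::finite) set) \<subseteq> C"
proof -
  have ball_in_C: "beta b \<subseteq> C" if "b \<in> W" "(beta b :: (real ^ 'n) set) \<inter> C \<noteq> {}" for b
    using components_maximal[OF C, of "beta b"] that U by (auto simp: beta_eq)
  show ?thesis
    using assms(4)
  proof (induction rule: ball_chain.induct)
    case start then show ?case using ball_in_C \<open>beta a0 \<inter> C \<noteq> {}\<close> by blast
  next
    case (step a b e)
    then have "(center e :: real ^ 'n) \<in> beta b \<inter> C" using in_ball_test_iff by blast
    then show ?case using ball_in_C step.hyps(2) by blast
  qed
qed

lemma ball_chain_overlap_closed:
  assumes "a \<in> ball_chain CARD('n) W a0" "b \<in> W" "(beta a \<inter> beta b :: (real ^ 'n::finite) set) \<noteq> {}"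
  shows "b \<in> ball_chain CARD('n) W a0"
proof -
  obtain e where "(center e :: real ^ 'n) \<in> beta a \<inter> beta b"
    using ex_center_in_open assms(3) by (metis beta_eq open_Int open_ball)
  then show ?thesis using assms(1,2) in_ball_test_iff by (blast intro: ball_chain.step)
qed

theorem lemma4p3:
  fixes U C :: "(real ^ 'n::finite) set"
  assumes "eff_open U"
    and "C \<in> components U"
  shows "eff_open C"
proof -
  obtain W where "ce W" and U: "U = (\<Union>a\<in>W. beta a)" using assms(1) unfolding eff_open_def by blast
  obtain p where "p \<in> C" using in_components_nonempty[OF assms(2)] by blast
  then obtain a0 where "a0 \<in> W" "p \<in> beta a0" using in_components_subset[OF assms(2)] U by blast
  then have meet: "beta a0 \<inter> C \<noteq> {}" using \<open>p \<in> C\<close> by blast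
  let ?R = "ball_chain CARD('n) W a0"
  have "C = (\<Union>a\<in>?R. beta a)"
  proof (rule component_eq_Union_overlap_closed[OF assms(2) U, where j = a0])
    show "open (beta a :: (real ^ 'n) set)" for a by (simp add: beta_eq)
    show "beta a \<subseteq> C" if "a \<in> ?R" for a
      by (rule ball_chain_subset_component[OF assms(2) U meet that])
    show "a0 \<in> ?R" using \<open>a0 \<in> W\<close> by (rule ball_chain.start)
    show "(beta a0 :: (real ^ 'n) set) \<noteq> {}" using meet by blast
    show "b \<in> ?R" if "a \<in> ?R" "b \<in> W" "(beta a \<inter> beta b :: (real ^ 'n) set) \<noteq> {}" for a b
      using that by (rule ball_chain_overlap_closed)
  qed
  with ce_ball_chain[OF \<open>ce W\<close>] show ?thesis unfolding eff_open_def by (intro exI[of _ ?R]) simp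
qed

end
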